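(* For all positive integers $\mu$, $\vec H_{0,1}(\mu)=\binom{2\mu}{\mu}\frac{1}{2\mu(2\mu-1)}$. Moreover $\frac{\partial}{\partial x}F_{0,1}(x)=z(x)$, where $z(x)=\frac{1-\sqrt{1-4x}}{2x}$ is the power series with $z(0)=1$ satisfying $x=\frac{z-1}{z^2}$.
   Context: Monotone Hurwitz numbers: for $g\ge0$, $n\ge1$ and positive integers $\mu_1,\ldots,\mu_n$ with $|\boldsymbol\mu|=\sum\mu_i$, let $m=2g-2+n+|\boldsymbol\mu|$; $\vec H_{g,n}(\boldsymbol\mu)$ is $\frac{1}{|\boldsymbol\mu|!}$ times the number of $m$-tuples of transpositions $(\sigma_1,\ldots,\sigma_m)$ in $S_{|\boldsymbol\mu|}$, with a labelling of the cycles of $\sigma_1\circ\cdots\circ\sigma_m$ by $1,\ldots,n$ so that cycle $i$ has length $\mu_i$, such that the $\sigma_j$ generate a transitive subgroup and, writing $\sigma_j=(a_j\,b_j)$ with $a_j<b_j$, $b_1\le\cdots\le b_m$. Free energy: $F_{g,n}(x_1,\ldots,x_n)=\sum_{\mu_i\ge1}\vec H_{g,n}(\boldsymbol\mu)\prod x_i^{\mu_i}$. *)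

theory Defs
  imports Complex_Main "HOL-Library.FuncSet" "HOL-Combinatorics.Transposition"
    "HOL-Computational_Algebra.Formal_Power_Series"
begin

text \<open>Symmetric group S_d acts on {0..<d} (points 1..d shifted by one).
  A transposition (a b) with a < b is encoded as the pair (a,b).
  A tuple (sigma_1,...,sigma_m) is a list of such pairs.\<close>

definition prod_transp :: "(nat \<times> nat) list \<Rightarrow> nat \<Rightarrow> nat" where
  "prod_transp ts = foldr (\<lambda>(a,b) f. transpose a b \<circ> f) ts id"

definition same_cycle :: "(nat \<Rightarrow> nat) \<Rightarrow> nat \<Rightarrow> nat \<Rightarrow> bool" where
  "same_cycle p x y \<longleftrightarrow> (\<exists>k. (p ^^ k) x = y)"

text \<open>Transitivity of the subgroup generated by the sigma_j: every point is
  reachable from every other one by repeatedly applying generators (the generators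
  are involutions, so this is the orbit of the generated group).\<close>
definition transitive_transp :: "nat \<Rightarrow> (nat \<times> nat) list \<Rightarrow> bool" where
  "transitive_transp d ts \<longleftrightarrow>
     (\<forall>x\<in>{..<d}. \<forall>y\<in>{..<d}.
        (x, y) \<in> {(u, transpose a b u) | u a b. (a, b) \<in> set ts}\<^sup>*)"

text \<open>A labelling is encoded as a map c from points to labels which is
  constant exactly on cycles (so it is a bijection cycles -> labels).\<close>
definition monotone_hurwitz_data :: "nat \<Rightarrow> nat list \<Rightarrow> ((nat \<times> nat) list \<times> (nat \<Rightarrow> nat)) set" where
  "monotone_hurwitz_data g mu =
    (let d = sum_list mu; n = length mu; m = 2 * g + n + d - 2 in
     {(ts, c). length ts = m
        \<and> (\<forall>(a, b) \<in> set ts. a < b \<and> b < d)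
        \<and> sorted (map snd ts)
        \<and> transitive_transp d ts
        \<and> c \<in> {..<d} \<rightarrow>\<^sub>E {..<n}
        \<and> (\<forall>x\<in>{..<d}. \<forall>y\<in>{..<d}. c x = c y \<longleftrightarrow> same_cycle (prod_transp ts) x y)
        \<and> (\<forall>i<n. card {x\<in>{..<d}. c x = i} = mu ! i)})"

definition monotone_hurwitz :: "nat \<Rightarrow> nat list \<Rightarrow> real" where
  "monotone_hurwitz g mu = real (card (monotone_hurwitz_data g mu)) / fact (sum_list mu)"

definition F01 :: "real fps" where
  "F01 = Abs_fps (\<lambda>k. if k = 0 then 0 else monotone_hurwitz 0 [k])"

end

theory Submission
  imports Defs "HOL-Library.Multiset" "HOL-Combinatorics.Cycles"
    "HOL-Analysis.Generalised_Binomial_Theorem"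
begin

text \<open>
  Read a tuple of transpositions as the edge list of a graph on the points. A transitive monotone
  tuple of \<open>\<mu> - 1\<close> transpositions is then a spanning tree of \<open>{0..<\<mu>}\<close> whose edges are sorted
  by their larger endpoint. Its last edge is \<open>(a, max)\<close>; removing it leaves a monotone tree on
  the component \<open>X\<close> of \<open>a\<close> and one on the rest, and conversely any such pair of trees and any
  \<open>a \<in> X\<close> glue back uniquely. Hence the number \<open>T(n)\<close> of monotone trees on \<open>n\<close> points satisfies
  \<open>T(n) = \<Sum>j. C(n-1, j) j T(j) T(n-j)\<close>, i.e. \<open>T(n) = (n-1)! Cat(n-1)\<close>. The product of the
  tree is a single \<open>\<mu>\<close>-cycle, since the last transposition splices the cycles of the two
  subtrees, so the labelling is forced and \<open>H_{0,1}(\<mu>) = Cat(\<mu>-1)/\<mu>\<close>.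
  The Catalan series \<open>z\<close> is the unique solution of \<open>x z\<^sup>2 = z - 1\<close> with \<open>z(0) = 1\<close>, and so
  equals \<open>(1 - \<surd>(1 - 4x))/(2x)\<close>; expanding the square root binomially gives the closed form.
\<close>

unbundle no vec_syntax
hide_const (open) Finite_Cartesian_Product.transpose
notation fps_nth (infixl \<open>$\<close> 75)

section \<open>Transpositions as graph edges\<close>

definition transp_step :: "(nat \<times> nat) list \<Rightarrow> nat rel" where
  "transp_step ts = {(u, transpose a b u) | u a b. (a, b) \<in> set ts}"

definition transp_connected :: "nat set \<Rightarrow> (nat \<times> nat) list \<Rightarrow> bool" where
  "transp_connected V ts \<longleftrightarrow> (\<forall>x\<in>V. \<forall>y\<in>V. (x, y) \<in> (transp_step ts)\<^sup>*)"

definition transps_within :: "nat set \<Rightarrow> (nat \<times> nat) list \<Rightarrow> bool" where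
  "transps_within V ts \<longleftrightarrow> (\<forall>(a, b)\<in>set ts. a \<in> V \<and> b \<in> V)"

definition transps_closed :: "nat set \<Rightarrow> (nat \<times> nat) list \<Rightarrow> bool" where
  "transps_closed X ts \<longleftrightarrow> (\<forall>(a, b)\<in>set ts. a \<in> X \<longleftrightarrow> b \<in> X)"

definition transp_component :: "nat set \<Rightarrow> (nat \<times> nat) list \<Rightarrow> nat \<Rightarrow> nat set" where
  "transp_component V ts p = {x \<in> V. (p, x) \<in> (transp_step ts)\<^sup>*}"

abbreviation transps_inside :: "nat set \<Rightarrow> (nat \<times> nat) list \<Rightarrow> (nat \<times> nat) list" where
  "transps_inside X ts \<equiv> filter (\<lambda>e. fst e \<in> X) ts"

abbreviation transps_outside :: "nat set \<Rightarrow> (nat \<times> nat) list \<Rightarrow> (nat \<times> nat) list" where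
  "transps_outside X ts \<equiv> filter (\<lambda>e. fst e \<notin> X) ts"

lemma transitive_transp_iff_transp_connected:
  "transitive_transp d ts \<longleftrightarrow> transp_connected {..<d} ts"
  unfolding transitive_transp_def transp_connected_def transp_step_def by simp

lemma transp_step_iff:
  "(u, v) \<in> transp_step ts \<longleftrightarrow> (\<exists>a b. (a, b) \<in> set ts \<and> v = transpose a b u)"
  unfolding transp_step_def by blast

lemma rtrancl_transp_step_mono:
  "set ts \<subseteq> set ts' \<Longrightarrow> (x, y) \<in> (transp_step ts)\<^sup>* \<Longrightarrow> (x, y) \<in> (transp_step ts')\<^sup>*"
  by (rule subsetD[OF rtrancl_mono]) (auto simp: transp_step_def)

lemma transp_step_sym: "(x, y) \<in> transp_step ts \<Longrightarrow> (y, x) \<in> transp_step ts"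
  unfolding transp_step_iff by (metis transpose_involutory)

lemma rtrancl_transp_step_sym: "(x, y) \<in> (transp_step ts)\<^sup>* \<Longrightarrow> (y, x) \<in> (transp_step ts)\<^sup>*"
  by (induction rule: rtrancl_induct)
    (auto intro: converse_rtrancl_into_rtrancl transp_step_sym)

lemma transp_connected_if_reachable:
  assumes "\<And>x. x \<in> V \<Longrightarrow> (p, x) \<in> (transp_step ts)\<^sup>*"
  shows "transp_connected V ts"
  unfolding transp_connected_def using assms rtrancl_transp_step_sym rtrancl_trans by metis

lemma transp_step_edge: "(a, b) \<in> set ts \<Longrightarrow> (a, b) \<in> transp_step ts"
  unfolding transp_step_iff by (metis transpose_apply_first)

lemma transps_closed_Compl: "transps_closed X ts \<Longrightarrow> transps_closed (- X) ts"
  unfolding transps_closed_def by auto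

lemma transps_closed_if_within: "transps_within X ts \<Longrightarrow> transps_closed X ts"
  unfolding transps_within_def transps_closed_def by auto

lemma transps_within_filter:
  assumes "transps_within V ts" "transps_closed X ts"
  shows "transps_within X (transps_inside X ts)" "transps_within (V - X) (transps_outside X ts)"
  using assms unfolding transps_within_def transps_closed_def by auto

lemma rtrancl_transp_step_closed:
  assumes "transps_closed X ts" "x \<in> X" "(x, y) \<in> (transp_step ts)\<^sup>*"
  shows "y \<in> X \<and> (x, y) \<in> (transp_step (transps_inside X ts))\<^sup>*"
  using assms(3)
proof (induction rule: rtrancl_induct)
  case base
  then show ?case using assms by simp
next
  case (step y z)
  then obtain a b where ab: "(a, b) \<in> set ts" "z = transpose a b y"
    by (auto simp: transp_step_iff)
  show ?case
  proof (cases "y = a \<or> y = b")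
    case True
    with step.IH ab(1) assms(1) have "a \<in> X" "b \<in> X"
      unfolding transps_closed_def by auto
    with ab True have "(y, z) \<in> transp_step (transps_inside X ts)" "z \<in> X"
      by (auto simp: transp_step_iff Transposition.transpose_def)
    then show ?thesis using step.IH by (blast intro: rtrancl.rtrancl_into_rtrancl)
  next
    case False
    then show ?thesis using ab step.IH by simp
  qed
qed

lemma transp_component_subset: "transp_component V ts p \<subseteq> V"
  unfolding transp_component_def by auto

lemma transp_component_self: "p \<in> V \<Longrightarrow> p \<in> transp_component V ts p"
  unfolding transp_component_def by simp

lemma transps_closed_transp_component:
  assumes "transps_within V ts"
  shows "transps_closed (transp_component V ts p) ts"
  unfolding transps_closed_def
proof clarify
  fix a b assume ab: "(a, b) \<in> set ts"
  then have "a \<in> V" "b \<in> V" using assms unfolding transps_within_def by auto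
  moreover have "(a, b) \<in> transp_step ts" "(b, a) \<in> transp_step ts"
    using transp_step_edge[OF ab] transp_step_sym by auto
  ultimately show "a \<in> transp_component V ts p \<longleftrightarrow> b \<in> transp_component V ts p"
    unfolding transp_component_def by (auto intro: rtrancl.rtrancl_into_rtrancl)
qed

lemma transp_connected_transp_component:
  assumes "transps_within V ts" "p \<in> V"
  defines "X \<equiv> transp_component V ts p"
  shows "transp_connected X (transps_inside X ts)"
proof (rule transp_connected_if_reachable)
  fix x assume "x \<in> X"
  then show "(p, x) \<in> (transp_step (transps_inside X ts))\<^sup>*"
    using rtrancl_transp_step_closed[OF transps_closed_transp_component[OF assms(1)]]
      transp_component_self[OF assms(2)]
    unfolding X_def transp_component_def by blast
qed

lemma transp_connected_Cons_inner:
  assumes "transp_connected V ((p, q) # ts)" "q \<in> transp_component V ts p"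
  shows "transp_connected V ts"
proof -
  have pq: "(p, q) \<in> (transp_step ts)\<^sup>*" "(q, p) \<in> (transp_step ts)\<^sup>*"
    using assms(2) rtrancl_transp_step_sym unfolding transp_component_def by auto
  have "transp_step ((p, q) # ts) \<subseteq> (transp_step ts)\<^sup>*"
  proof clarify
    fix u v assume "(u, v) \<in> transp_step ((p, q) # ts)"
    then obtain a b where ab: "(a, b) = (p, q) \<or> (a, b) \<in> set ts" "v = transpose a b u"
      by (auto simp: transp_step_iff)
    show "(u, v) \<in> (transp_step ts)\<^sup>*"
    proof (cases "(a, b) \<in> set ts")
      case True
      then have "(u, v) \<in> transp_step ts" using ab(2) unfolding transp_step_iff by blast
      then show ?thesis by simp
    next
      case False
      then have "v = transpose p q u" using ab by auto
      then show ?thesis using pq by (cases "u = p"; cases "u = q") auto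
    qed
  qed
  then have "(transp_step ((p, q) # ts))\<^sup>* \<subseteq> (transp_step ts)\<^sup>*"
    by (rule rtrancl_subset_rtrancl)
  then show ?thesis using assms(1) unfolding transp_connected_def by blast
qed

lemma rtrancl_transp_step_Cons_outside:
  assumes "transps_closed X ts" "p \<in> X" "q \<notin> X" "(q, v) \<in> (transp_step ((p, q) # ts))\<^sup>*"
  shows "v \<in> X \<or> (q, v) \<in> (transp_step (transps_outside X ts))\<^sup>*"
  using assms(4)
proof (induction rule: rtrancl_induct)
  case (step v w)
  let ?S = "transp_step (transps_outside X ts)"
  obtain a b where ab: "(a, b) = (p, q) \<or> (a, b) \<in> set ts" "w = transpose a b v"
    using step.hyps(2) by (auto simp: transp_step_iff)
  then consider "(a, b) = (p, q)" | "(a, b) \<in> set ts" "a \<in> X \<longleftrightarrow> b \<in> X"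
    using assms(1) unfolding transps_closed_def by auto
  then show ?case
  proof cases
    case 1
    then show ?thesis using step.IH ab(2) assms(2,3) by (cases "v = p"; cases "v = q") auto
  next
    case 2
    show ?thesis
    proof (cases "v = a \<or> v = b")
      case True
      show ?thesis
      proof (cases "v \<in> X")
        case True
        with \<open>v = a \<or> v = b\<close> 2 ab(2) show ?thesis by auto
      next
        case False
        with \<open>v = a \<or> v = b\<close> 2 have "(a, b) \<in> set (transps_outside X ts)" by auto
        then have "(v, w) \<in> ?S" using ab(2) unfolding transp_step_iff by blast
        with False step.IH show ?thesis by (auto intro: rtrancl.rtrancl_into_rtrancl)
      qed
    next
      case False
      with ab(2) step.IH show ?thesis by simp
    qed
  qed
qed simp

lemma transp_connected_Cons_split:
  assumes "transps_within V ts" "p \<in> V" "q \<in> V" "transp_connected V ((p, q) # ts)"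
    and X: "X = transp_component V ts p" and "q \<notin> X"
  shows "transps_within X (transps_inside X ts)" "transp_connected X (transps_inside X ts)"
    "transps_within (V - X) (transps_outside X ts)" "transp_connected (V - X) (transps_outside X ts)"
proof -
  have closed: "transps_closed X ts"
    unfolding X by (rule transps_closed_transp_component[OF assms(1)])
  show "transps_within X (transps_inside X ts)" "transps_within (V - X) (transps_outside X ts)"
    using transps_within_filter[OF assms(1) closed] by auto
  show "transp_connected X (transps_inside X ts)"
    unfolding X by (rule transp_connected_transp_component[OF assms(1,2)])
  have "p \<in> X" unfolding X by (rule transp_component_self[OF assms(2)])
  then show "transp_connected (V - X) (transps_outside X ts)"
    using rtrancl_transp_step_Cons_outside[OF closed _ \<open>q \<notin> X\<close>] assms(3,4)
    by (intro transp_connected_if_reachable[where p = q]) (auto simp: transp_connected_def)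
qed

lemma transp_connected_bridge:
  assumes "transp_connected X s1" "transp_connected Y s2" "a \<in> X" "b \<in> Y"
    and "set s1 \<union> set s2 \<subseteq> set ts" "(a, b) \<in> set ts"
  shows "transp_connected (X \<union> Y) ts"
proof (rule transp_connected_if_reachable[where p = b])
  fix x assume "x \<in> X \<union> Y"
  then show "(b, x) \<in> (transp_step ts)\<^sup>*"
  proof
    assume "x \<in> X"
    then have "(a, x) \<in> (transp_step s1)\<^sup>*" using assms(1,3) unfolding transp_connected_def by blast
    then have "(a, x) \<in> (transp_step ts)\<^sup>*" by (rule rtrancl_transp_step_mono[rotated]) (use assms(5) in blast)
    moreover have "(b, a) \<in> transp_step ts" by (rule transp_step_sym, rule transp_step_edge, fact)
    ultimately show ?thesis by (blast intro: converse_rtrancl_into_rtrancl)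
  next
    assume "x \<in> Y"
    then have "(b, x) \<in> (transp_step s2)\<^sup>*" using assms(2,4) unfolding transp_connected_def by blast
    then show ?thesis by (rule rtrancl_transp_step_mono[rotated]) (use assms(5) in blast)
  qed
qed

lemma card_le_length_Suc_if_transp_connected:
  "finite V \<Longrightarrow> V \<noteq> {} \<Longrightarrow> transps_within V ts \<Longrightarrow> transp_connected V ts
    \<Longrightarrow> card V \<le> length ts + 1"
proof (induction "length ts" arbitrary: ts V rule: less_induct)
  case less
  show ?case
  proof (cases ts)
    case Nil
    then have "\<forall>x\<in>V. \<forall>y\<in>V. x = y"
      using less.prems(4) unfolding transp_connected_def transp_step_def by auto
    then have "card V \<le> 1" using less.prems(1) by (simp add: card_le_Suc0_iff_eq)
    then show ?thesis by simp
  next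
    case (Cons e ts')
    obtain p q where e: "e = (p, q)" by (cases e)
    have pq: "p \<in> V" "q \<in> V" and within: "transps_within V ts'"
      using less.prems(3) unfolding transps_within_def Cons e by auto
    have conn: "transp_connected V ((p, q) # ts')" using less.prems(4) Cons e by simp
    define X where "X = transp_component V ts' p"
    show ?thesis
    proof (cases "q \<in> X")
      case True
      have "card V \<le> length ts' + 1"
        using less.hyps[of ts' V] less.prems(1,2) within
          transp_connected_Cons_inner[OF conn True[unfolded X_def]] Cons
        by simp
      then show ?thesis using Cons by simp
    next
      case False
      have X: "X \<subseteq> V" "p \<in> X"
        unfolding X_def using transp_component_subset transp_component_self[OF pq(1)] by auto
      then have "finite X" using less.prems(1) finite_subset by blast
      note parts = transp_connected_Cons_split[OF within pq conn X_def False]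
      have shorter: "length (transps_inside X ts') < length ts"
        "length (transps_outside X ts') < length ts"
        using Cons by (simp_all add: le_imp_less_Suc)
      have "card X \<le> length (transps_inside X ts') + 1"
        using less.hyps[OF shorter(1) \<open>finite X\<close> _ parts(1,2)] X(2) by blast
      moreover have "card (V - X) \<le> length (transps_outside X ts') + 1"
        using less.hyps[OF shorter(2) _ _ parts(3,4)] less.prems(1) pq(2) False by blast
      moreover have "card V = card X + card (V - X)"
        using card_Diff_subset[OF \<open>finite X\<close> X(1)] card_mono[OF less.prems(1) X(1)] by simp
      moreover have "length (transps_inside X ts') + length (transps_outside X ts') = length ts'"
        by (rule sum_length_filter_compl)
      ultimately show ?thesis using Cons by simp
    qed
  qed
qed

section \<open>Monotone trees\<close>

text \<open>By \<open>card_le_length_Suc_if_transp_connected\<close>, a connected list of \<open>card V - 1\<close> edges is a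
  spanning tree of \<open>V\<close>.\<close>

definition monotone_trees :: "nat set \<Rightarrow> (nat \<times> nat) list set" where
  "monotone_trees V = {ts. length ts = card V - 1 \<and> (\<forall>(a, b)\<in>set ts. a < b \<and> a \<in> V \<and> b \<in> V)
     \<and> sorted (map snd ts) \<and> transp_connected V ts}"

lemma transps_within_monotone_trees: "ts \<in> monotone_trees V \<Longrightarrow> transps_within V ts"
  unfolding monotone_trees_def transps_within_def by auto

lemma finite_monotone_trees: "finite V \<Longrightarrow> finite (monotone_trees V)"
  by (rule finite_subset[of _ "{ts. set ts \<subseteq> V \<times> V \<and> length ts = card V - 1}"])
    (auto simp: monotone_trees_def finite_lists_length_eq)

lemma monotone_trees_singleton: "monotone_trees {v} = {[]}"
  unfolding monotone_trees_def transp_connected_def by auto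

text \<open>Connectivity forces an edge at the maximum, and monotonicity puts it last.\<close>

lemma monotone_tree_last:
  assumes "finite V" "card V \<ge> 2" "ts \<in> monotone_trees V"
  obtains ts' a where "ts = ts' @ [(a, Max V)]" "a \<in> V" "a < Max V"
proof -
  let ?M = "Max V"
  have "V \<noteq> {}" using assms(2) by auto
  then have MV: "?M \<in> V" using Max_in[OF assms(1)] by blast
  have le: "b \<le> ?M" if "b \<in> V" for b using Max_ge[OF assms(1) that] .
  have edge: "\<And>a b. (a, b) \<in> set ts \<Longrightarrow> a < b \<and> a \<in> V \<and> b \<in> V"
    using assms(3) unfolding monotone_trees_def by auto
  have "\<not> V \<subseteq> {?M}"
    using card_mono[of "{?M}" V] assms(2) by auto
  then obtain v where v: "v \<in> V" "v \<noteq> ?M" by blast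
  have "\<exists>a. (a, ?M) \<in> set ts"
  proof (rule ccontr)
    assume none: "\<nexists>a. (a, ?M) \<in> set ts"
    have "w = ?M" if "(?M, w) \<in> (transp_step ts)\<^sup>*" for w
      using that
    proof (induction rule: rtrancl_induct)
      case (step y z)
      then obtain a b where ab: "(a, b) \<in> set ts" "z = transpose a b y"
        unfolding transp_step_iff by blast
      have "b \<noteq> ?M" "a \<noteq> ?M" using none ab(1) edge[OF ab(1)] le[of b] by auto
      then show ?case using ab(2) step.IH by simp
    qed simp
    moreover have "(?M, v) \<in> (transp_step ts)\<^sup>*"
      using assms(3) MV v(1) unfolding monotone_trees_def transp_connected_def by blast
    ultimately show False using v(2) by simp
  qed
  then obtain a0 where a0: "(a0, ?M) \<in> set ts" by blast
  then have "ts \<noteq> []" by auto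
  then obtain ts' l where "ts = ts' @ [l]" by (metis rev_exhaust)
  moreover obtain a b where "l = (a, b)" by (cases l)
  ultimately have ts: "ts = ts' @ [(a, b)]" by simp
  have "?M \<le> b"
  proof (cases "(a0, ?M) = (a, b)")
    case False
    then have "(a0, ?M) \<in> set ts'" using a0 ts by auto
    then show ?thesis using assms(3) unfolding ts monotone_trees_def by (auto simp: sorted_append)
  qed simp
  moreover have "b \<le> ?M" "a < b" "a \<in> V" using edge[of a b] le unfolding ts by auto
  ultimately show thesis using that ts by simp
qed

lemma sort_key_filter_partition:
  assumes "sorted (map f xs)"
    and "\<And>x y. x \<in> set xs \<Longrightarrow> y \<in> set xs \<Longrightarrow> f x = f y \<Longrightarrow> P x \<longleftrightarrow> P y"
  shows "sort_key f (filter P xs @ filter (\<lambda>x. \<not> P x) xs) = xs"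
proof (rule properties_for_sort_key)
  show "mset xs = mset (filter P xs @ filter (\<lambda>x. \<not> P x) xs)" by simp
  fix k assume k: "k \<in> set xs"
  show "filter (\<lambda>x. f k = f x) xs = filter (\<lambda>x. f k = f x) (filter P xs @ filter (\<lambda>x. \<not> P x) xs)"
  proof (cases "P k")
    case True
    then have "filter (\<lambda>x. f k = f x \<and> P x) xs = filter (\<lambda>x. f k = f x) xs"
      "filter (\<lambda>x. f k = f x \<and> \<not> P x) xs = []"
      using assms(2)[OF k] by (auto intro: filter_cong simp: filter_empty_conv)
    then show ?thesis by (simp add: conj_commute)
  next
    case False
    then have "filter (\<lambda>x. f k = f x \<and> \<not> P x) xs = filter (\<lambda>x. f k = f x) xs"
      "filter (\<lambda>x. f k = f x \<and> P x) xs = []"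
      using assms(2)[OF k] by (auto intro: filter_cong simp: filter_empty_conv)
    then show ?thesis by (simp add: conj_commute)
  qed
qed (rule assms(1))

text \<open>A monotone tree on \<open>V\<close> minus its last edge \<open>(a, Max V)\<close> is the component \<open>X\<close> of \<open>a\<close>
  together with a monotone tree on \<open>X\<close> and one on \<open>V - X\<close>.\<close>

definition monotone_tree_splittings ::
    "nat set \<Rightarrow> (nat set \<times> nat \<times> (nat \<times> nat) list \<times> (nat \<times> nat) list) set" where
  "monotone_tree_splittings V = {(X, a, s1, s2). X \<subseteq> V - {Max V} \<and> a \<in> X
     \<and> s1 \<in> monotone_trees X \<and> s2 \<in> monotone_trees (V - X)}"

definition split_monotone_tree ::
    "nat set \<Rightarrow> (nat \<times> nat) list \<Rightarrow> nat set \<times> nat \<times> (nat \<times> nat) list \<times> (nat \<times> nat) list" where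
  "split_monotone_tree V ts = (let ts' = butlast ts; a = fst (last ts); X = transp_component V ts' a
     in (X, a, transps_inside X ts', transps_outside X ts'))"

definition join_monotone_trees ::
    "nat set \<Rightarrow> nat set \<times> nat \<times> (nat \<times> nat) list \<times> (nat \<times> nat) list \<Rightarrow> (nat \<times> nat) list" where
  "join_monotone_trees V = (\<lambda>(X, a, s1, s2). sort_key snd (s1 @ s2) @ [(a, Max V)])"

lemma monotone_trees_split_parts:
  assumes "finite V" "card V \<ge> 2" "ts @ [(a, Max V)] \<in> monotone_trees V" "a \<in> V"
  defines "X \<equiv> transp_component V ts a"
  shows "X \<subseteq> V - {Max V}" "a \<in> X"
    "transps_inside X ts \<in> monotone_trees X" "transps_outside X ts \<in> monotone_trees (V - X)"
proof -
  let ?M = "Max V"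
  have "V \<noteq> {}" using assms(2) by auto
  then have MV: "?M \<in> V" using Max_in[OF assms(1)] by blast
  have within: "transps_within V ts"
    using transps_within_monotone_trees[OF assms(3)] unfolding transps_within_def by auto
  have conn: "transp_connected V ((a, ?M) # ts)"
    using assms(3) unfolding monotone_trees_def transp_connected_def transp_step_def by auto
  have len: "length ts = card V - 2" and sorted: "sorted (map snd ts)"
    and edges: "\<forall>(p, q)\<in>set ts. p < q"
    using assms(3) unfolding monotone_trees_def by (auto simp: sorted_append)
  show "a \<in> X" unfolding X_def by (rule transp_component_self[OF assms(4)])
  have XV: "X \<subseteq> V" unfolding X_def by (rule transp_component_subset)
  then have "finite X" using assms(1) finite_subset by blast
  have "?M \<notin> X"
  proof
    assume "?M \<in> X"
    then have "transp_connected V ts"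
      using transp_connected_Cons_inner[OF conn] unfolding X_def by blast
    then have "card V \<le> length ts + 1"
      using card_le_length_Suc_if_transp_connected[OF assms(1) \<open>V \<noteq> {}\<close> within] by blast
    then show False using len assms(2) by linarith
  qed
  then show "X \<subseteq> V - {?M}" using XV by blast
  note parts = transp_connected_Cons_split[OF within assms(4) MV conn
      X_def[THEN meta_eq_to_obj_eq] \<open>?M \<notin> X\<close>]
  have "card X \<le> length (transps_inside X ts) + 1"
    using card_le_length_Suc_if_transp_connected[OF \<open>finite X\<close> _ parts(1,2)] \<open>a \<in> X\<close>
    by blast
  moreover have "card (V - X) \<le> length (transps_outside X ts) + 1"
    using card_le_length_Suc_if_transp_connected[OF _ _ parts(3,4)] assms(1) MV \<open>?M \<notin> X\<close>
    by blast
  moreover have "card V = card X + card (V - X)"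
    using card_Diff_subset[OF \<open>finite X\<close> XV] card_mono[OF assms(1) XV] by simp
  moreover have "length (transps_inside X ts) + length (transps_outside X ts) = length ts"
    by (rule sum_length_filter_compl)
  ultimately have len12: "length (transps_inside X ts) = card X - 1"
    "length (transps_outside X ts) = card (V - X) - 1"
    using len assms(2) by auto
  have edges12: "\<forall>(p, q)\<in>set (transps_inside X ts). p < q \<and> p \<in> X \<and> q \<in> X"
    "\<forall>(p, q)\<in>set (transps_outside X ts). p < q \<and> p \<in> V - X \<and> q \<in> V - X"
    using edges parts(1,3) unfolding transps_within_def by fastforce+
  show "transps_inside X ts \<in> monotone_trees X" "transps_outside X ts \<in> monotone_trees (V - X)"
    unfolding monotone_trees_def mem_Collect_eq
    using len12 edges12 sorted_filter[OF sorted] parts(2,4) by blast+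
qed

lemma monotone_trees_split:
  assumes "finite V" "card V \<ge> 2" "ts \<in> monotone_trees V"
  shows "split_monotone_tree V ts \<in> monotone_tree_splittings V"
    "join_monotone_trees V (split_monotone_tree V ts) = ts"
proof -
  obtain ts' a where ts: "ts = ts' @ [(a, Max V)]" "a \<in> V"
    using monotone_tree_last[OF assms] by blast
  define X where "X = transp_component V ts' a"
  have split: "split_monotone_tree V ts = (X, a, transps_inside X ts', transps_outside X ts')"
    unfolding split_monotone_tree_def ts(1) X_def by (simp add: Let_def)
  note parts = monotone_trees_split_parts[OF assms(1,2) assms(3)[unfolded ts(1)] ts(2), folded X_def]
  show "split_monotone_tree V ts \<in> monotone_tree_splittings V"
    unfolding split monotone_tree_splittings_def using parts by simp
  have "transps_within V ts'"
    using transps_within_monotone_trees[OF assms(3)] unfolding ts(1) transps_within_def by simp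
  then have "transps_closed X ts'"
    unfolding X_def by (rule transps_closed_transp_component)
  then have edge_closed: "fst e \<in> X \<longleftrightarrow> snd e \<in> X" if "e \<in> set ts'" for e
    using that unfolding transps_closed_def by (auto simp: case_prod_beta)
  have same_snd: "fst x \<in> X \<longleftrightarrow> fst y \<in> X" if "x \<in> set ts'" "y \<in> set ts'" "snd x = snd y" for x y
    using edge_closed[OF that(1)] edge_closed[OF that(2)] that(3) by simp
  have "sorted (map snd ts')"
    using assms(3) unfolding ts(1) monotone_trees_def by (simp add: sorted_append)
  then have "sort_key snd (transps_inside X ts' @ transps_outside X ts') = ts'"
    by (rule sort_key_filter_partition[where P = "\<lambda>e. fst e \<in> X"]) (fact same_snd)
  then show "join_monotone_trees V (split_monotone_tree V ts) = ts"
    unfolding split join_monotone_trees_def by (simp add: ts(1))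
qed

lemma monotone_tree_splittingsD:
  assumes "finite V" "(X, a, s1, s2) \<in> monotone_tree_splittings V"
  shows "X \<subseteq> V" "finite X" "a \<in> X" "a < Max V" "Max V \<in> V - X"
    "s1 \<in> monotone_trees X" "s2 \<in> monotone_trees (V - X)"
proof -
  have XV: "X \<subseteq> V - {Max V}" and "a \<in> X"
    using assms(2) unfolding monotone_tree_splittings_def by auto
  then show "X \<subseteq> V" "a \<in> X" by auto
  then show "finite X" using assms(1) finite_subset by blast
  have "Max V \<in> V" using Max_in[OF assms(1)] \<open>a \<in> X\<close> \<open>X \<subseteq> V\<close> by blast
  then show "Max V \<in> V - X" using XV by blast
  have "a \<le> Max V" "a \<noteq> Max V" using Max_ge[OF assms(1)] \<open>a \<in> X\<close> XV by auto
  then show "a < Max V" by simp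
  show "s1 \<in> monotone_trees X" "s2 \<in> monotone_trees (V - X)"
    using assms(2) unfolding monotone_tree_splittings_def by auto
qed

lemma monotone_tree_splittings_sort_key:
  assumes "(X, a, s1, s2) \<in> monotone_tree_splittings V"
  defines "u \<equiv> sort_key snd (s1 @ s2)"
  shows "transps_closed X u" "transps_inside X u = s1" "transps_outside X u = s2"
proof -
  have e1: "\<forall>(p, q)\<in>set s1. p \<in> X \<and> q \<in> X" and e2: "\<forall>(p, q)\<in>set s2. p \<notin> X \<and> q \<notin> X"
    using assms(1) unfolding monotone_tree_splittings_def monotone_trees_def by auto
  then show "transps_closed X u" unfolding transps_closed_def u_def by auto
  have "transps_inside X s1 = s1" "transps_inside X s2 = []"
    "transps_outside X s1 = []" "transps_outside X s2 = s2"
    using e1 e2 by (auto simp: filter_id_conv filter_empty_conv)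
  moreover have "sort_key snd s1 = s1" "sort_key snd s2 = s2"
    using assms(1) unfolding monotone_tree_splittings_def monotone_trees_def
    by (simp_all add: sort_key_id_if_sorted)
  ultimately show "transps_inside X u = s1" "transps_outside X u = s2"
    unfolding u_def filter_sort by simp_all
qed

lemma split_join_monotone_trees:
  assumes "finite V" "(X, a, s1, s2) \<in> monotone_tree_splittings V"
  shows "split_monotone_tree V (join_monotone_trees V (X, a, s1, s2)) = (X, a, s1, s2)"
proof -
  note t = monotone_tree_splittingsD[OF assms]
  define u where "u = sort_key snd (s1 @ s2)"
  note parts = monotone_tree_splittings_sort_key[OF assms(2), folded u_def]
  have "transp_component V u a \<subseteq> X"
    using rtrancl_transp_step_closed[OF parts(1) t(3)] unfolding transp_component_def by blast
  moreover have "X \<subseteq> transp_component V u a"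
  proof
    fix x assume "x \<in> X"
    then have "(a, x) \<in> (transp_step s1)\<^sup>*"
      using t(3,6) unfolding monotone_trees_def transp_connected_def by blast
    then have "(a, x) \<in> (transp_step u)\<^sup>*" by (rule rtrancl_transp_step_mono[rotated]) (simp add: u_def)
    then show "x \<in> transp_component V u a"
      using \<open>x \<in> X\<close> t(1) unfolding transp_component_def by blast
  qed
  moreover have "join_monotone_trees V (X, a, s1, s2) = u @ [(a, Max V)]"
    unfolding join_monotone_trees_def u_def by simp
  ultimately show ?thesis
    unfolding split_monotone_tree_def Let_def using parts by simp
qed

lemma join_monotone_trees_mem:
  assumes "finite V" "(X, a, s1, s2) \<in> monotone_tree_splittings V"
  shows "join_monotone_trees V (X, a, s1, s2) \<in> monotone_trees V"
proof -
  let ?M = "Max V"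
  note t = monotone_tree_splittingsD[OF assms]
  define ts where "ts = sort_key snd (s1 @ s2) @ [(a, ?M)]"
  have set_ts: "set ts = insert (a, ?M) (set s1 \<union> set s2)" unfolding ts_def by simp
  have e1: "\<forall>(p, q)\<in>set s1. p < q \<and> p \<in> X \<and> q \<in> X"
    and e2: "\<forall>(p, q)\<in>set s2. p < q \<and> p \<in> V - X \<and> q \<in> V - X"
    and l1: "length s1 = card X - 1" and l2: "length s2 = card (V - X) - 1"
    and c1: "transp_connected X s1" and c2: "transp_connected (V - X) s2"
    using t(6,7) unfolding monotone_trees_def by simp_all
  have "card V = card X + card (V - X)"
    using card_Diff_subset[OF t(2,1)] card_mono[OF assms(1) t(1)] by simp
  moreover have "card X > 0" using t(2,3) card_gt_0_iff by blast
  moreover have "card (V - X) > 0" using t(5) finite_Diff[OF assms(1)] card_gt_0_iff by blast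
  ultimately have len: "length ts = card V - 1"
    using l1 l2 unfolding ts_def by simp
  have edges_s: "\<forall>(p, q)\<in>set s1 \<union> set s2. p < q \<and> p \<in> V \<and> q \<in> V"
    using t(1) e1 e2 by blast
  moreover have "a \<in> V" "?M \<in> V" using t(1,3,5) by auto
  ultimately have edges: "\<forall>(p, q)\<in>set ts. p < q \<and> p \<in> V \<and> q \<in> V"
    unfolding set_ts using t(4) by blast
  have "q \<le> ?M" if "(p, q) \<in> set s1 \<union> set s2" for p q
    using edges_s that Max_ge[OF assms(1)] by blast
  then have sorted: "sorted (map snd ts)"
    unfolding ts_def by (force simp: sorted_append)
  have "transp_connected (X \<union> (V - X)) ts"
    by (rule transp_connected_bridge[OF c1 c2 t(3,5)]) (auto simp: set_ts)
  moreover have "X \<union> (V - X) = V" using t(1) by blast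
  moreover have "join_monotone_trees V (X, a, s1, s2) = ts"
    unfolding join_monotone_trees_def ts_def by simp
  ultimately show ?thesis
    unfolding monotone_trees_def using len edges sorted by simp
qed

section \<open>Counting monotone trees\<close>

lemma card_monotone_trees_rec:
  assumes "finite V" "card V \<ge> 2"
  shows "card (monotone_trees V)
    = (\<Sum>X\<in>Pow (V - {Max V}). card X * (card (monotone_trees X) * card (monotone_trees (V - X))))"
proof -
  have "bij_betw (join_monotone_trees V) (monotone_tree_splittings V) (monotone_trees V)"
    by (rule bij_betw_byWitness[where f' = "split_monotone_tree V"])
      (use monotone_trees_split[OF assms] split_join_monotone_trees[OF assms(1)]
        join_monotone_trees_mem[OF assms(1)] in auto)
  then have "card (monotone_trees V) = card (monotone_tree_splittings V)"
    by (simp add: bij_betw_same_card)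
  also have "monotone_tree_splittings V
      = (SIGMA X:Pow (V - {Max V}). SIGMA a:X. monotone_trees X \<times> monotone_trees (V - X))"
    unfolding monotone_tree_splittings_def by auto
  also have "card \<dots> = (\<Sum>X\<in>Pow (V - {Max V}).
      card (SIGMA a:X. monotone_trees X \<times> monotone_trees (V - X)))"
    using assms(1) finite_monotone_trees by (intro card_SigmaI) (auto dest: finite_subset)
  also have "\<dots> = (\<Sum>X\<in>Pow (V - {Max V}).
      card X * (card (monotone_trees X) * card (monotone_trees (V - X))))"
    using assms(1) finite_monotone_trees
    by (intro sum.cong refl) (auto simp: card_cartesian_product dest: finite_subset)
  finally show ?thesis .
qed

fun catalan :: "nat \<Rightarrow> nat" where
  "catalan 0 = 1"
| "catalan (Suc n) = (\<Sum>i\<le>n. catalan i * catalan (n - i))"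

lemma sum_Pow_card:
  assumes "finite A"
  shows "(\<Sum>X\<in>Pow A. g (card X)) = (\<Sum>j\<le>card A. (card A choose j) * g j)"
proof -
  have "(\<Sum>X\<in>Pow A. g (card X)) = (\<Sum>j\<le>card A. \<Sum>X\<in>{X \<in> Pow A. card X = j}. g (card X))"
    using assms by (intro sum.group[symmetric]) (auto intro: card_mono)
  also have "\<dots> = (\<Sum>j\<le>card A. (card A choose j) * g j)"
  proof (rule sum.cong[OF refl])
    fix j
    have "(\<Sum>X\<in>{X \<in> Pow A. card X = j}. g (card X)) = card {X. X \<subseteq> A \<and> card X = j} * g j"
      by (simp add: Pow_def)
    also have "\<dots> = (card A choose j) * g j" using n_subsets[OF assms] by simp
    finally show "(\<Sum>X\<in>{X \<in> Pow A. card X = j}. g (card X)) = (card A choose j) * g j" .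
  qed
  finally show ?thesis .
qed

lemma catalan_binomial_convolution:
  "(\<Sum>j\<le>Suc m. (Suc m choose j) * (j * (fact (j - 1) * catalan (j - 1))
      * (fact (Suc (Suc m) - j - 1) * catalan (Suc (Suc m) - j - 1))))
    = fact (Suc m) * catalan (Suc m)"
proof -
  have "(\<Sum>j\<le>Suc m. (Suc m choose j) * (j * (fact (j - 1) * catalan (j - 1))
      * (fact (Suc (Suc m) - j - 1) * catalan (Suc (Suc m) - j - 1))))
    = (\<Sum>i\<le>m. (Suc m choose Suc i) * (Suc i * (fact i * catalan i) * (fact (m - i) * catalan (m - i))))"
    by (subst sum.atMost_Suc_shift) simp
  also have "\<dots> = (\<Sum>i\<le>m. fact (Suc m) * (catalan i * catalan (m - i)))"
  proof (rule sum.cong[OF refl])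
    fix i assume "i \<in> {..m}"
    then have "fact (Suc i) * fact (Suc m - Suc i) * (Suc m choose Suc i) = (fact (Suc m) :: nat)"
      using binomial_fact_lemma[of "Suc i" "Suc m"] by simp
    moreover have "(Suc m choose Suc i) * (Suc i * (fact i * catalan i) * (fact (m - i) * catalan (m - i)))
        = (fact (Suc i) * fact (Suc m - Suc i) * (Suc m choose Suc i)) * (catalan i * catalan (m - i))"
      by (simp add: algebra_simps)
    ultimately show "(Suc m choose Suc i) * (Suc i * (fact i * catalan i) * (fact (m - i) * catalan (m - i)))
        = fact (Suc m) * (catalan i * catalan (m - i))"
      by simp
  qed
  also have "\<dots> = fact (Suc m) * catalan (Suc m)" by (simp add: sum_distrib_left)
  finally show ?thesis .
qed

lemma card_monotone_trees:
  "finite V \<Longrightarrow> V \<noteq> {} \<Longrightarrow> card (monotone_trees V) = fact (card V - 1) * catalan (card V - 1)"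
proof (induction "card V" arbitrary: V rule: less_induct)
  case less
  show ?case
  proof (cases "card V \<ge> 2")
    case False
    with less.prems have "card V = 1" by (simp add: Suc_leI card_gt_0_iff le_antisym)
    then obtain v where "V = {v}" using card_1_singletonE by blast
    then show ?thesis by (simp add: monotone_trees_singleton)
  next
    case True
    let ?M = "Max V" and ?n = "card V"
    have MV: "?M \<in> V" using Max_in[OF less.prems] .
    define g where "g j = j * (fact (j - 1) * catalan (j - 1)) * (fact (?n - j - 1) * catalan (?n - j - 1))"
      for j
    have "card X * (card (monotone_trees X) * card (monotone_trees (V - X))) = g (card X)"
      if X: "X \<subseteq> V - {?M}" for X
    proof (cases "X = {}")
      case False
      have XV: "X \<subseteq> V" "X \<noteq> V" "V - X \<noteq> {}" "V - X \<noteq> V" using X MV False by auto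
      have "finite X" using XV(1) less.prems(1) by (rule finite_subset)
      have "card (monotone_trees X) = fact (card X - 1) * catalan (card X - 1)"
        using less.hyps[OF psubset_card_mono[OF less.prems(1)] \<open>finite X\<close> False] XV by blast
      moreover have "card (monotone_trees (V - X))
          = fact (card (V - X) - 1) * catalan (card (V - X) - 1)"
        using less.hyps[OF psubset_card_mono[OF less.prems(1)] _ XV(3)] less.prems(1) XV by blast
      ultimately show ?thesis
        unfolding g_def card_Diff_subset[OF \<open>finite X\<close> XV(1)] by (simp add: algebra_simps)
    qed (simp add: g_def)
    then have "card (monotone_trees V) = (\<Sum>X\<in>Pow (V - {?M}). g (card X))"
      unfolding card_monotone_trees_rec[OF less.prems(1) True] by (intro sum.cong) auto
    also have "\<dots> = (\<Sum>j\<le>?n - 1. (?n - 1 choose j) * g j)"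
      using sum_Pow_card[of "V - {?M}" g] less.prems(1) MV by simp
    finally have "card (monotone_trees V) = (\<Sum>j\<le>?n - 1. (?n - 1 choose j) * g j)" .
    moreover obtain m where m: "?n = Suc (Suc m)" using True by (metis add_2_eq_Suc le_iff_add)
    ultimately show ?thesis
      unfolding g_def m using catalan_binomial_convolution[of m] by simp
  qed
qed

section \<open>The product of a monotone tree is a single cycle\<close>

lemma prod_transp_Nil [simp]: "prod_transp [] = id"
  unfolding prod_transp_def by simp

lemma prod_transp_Cons [simp]: "prod_transp ((a, b) # ts) = transpose a b \<circ> prod_transp ts"
  unfolding prod_transp_def by simp

lemma prod_transp_append: "prod_transp (ts @ ts') = prod_transp ts \<circ> prod_transp ts'"
  by (induction ts) (auto simp: comp_assoc)

lemma permutation_prod_transp: "permutation (prod_transp ts)"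
  by (induction ts) (auto intro!: permutation_compose permutation_swap_id simp: permutation_id)

lemma prod_transp_transps_inside:
  assumes "transps_closed X ts" "x \<in> X"
  shows "prod_transp ts x = prod_transp (transps_inside X ts) x \<and> prod_transp ts x \<in> X"
  using assms
proof (induction ts)
  case (Cons e ts)
  obtain p q where e: "e = (p, q)" by (cases e)
  have "transps_closed X ts" and pq: "p \<in> X \<longleftrightarrow> q \<in> X"
    using Cons.prems(1) unfolding transps_closed_def e by auto
  then have IH: "prod_transp ts x = prod_transp (transps_inside X ts) x" "prod_transp ts x \<in> X"
    using Cons.IH Cons.prems(2) by auto
  show ?case
  proof (cases "p \<in> X")
    case True
    then show ?thesis using IH pq unfolding e by (auto simp: Transposition.transpose_def)
  next
    case False
    then have "transpose p q (prod_transp ts x) = prod_transp ts x"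
      using IH(2) pq by (intro transpose_apply_other) auto
    then show ?thesis using IH False unfolding e by simp
  qed
qed simp

lemma same_cycle_refl: "same_cycle p x x"
  unfolding same_cycle_def by (rule exI[of _ 0]) simp

lemma same_cycle_step: "same_cycle p x y \<Longrightarrow> same_cycle p x (p y)"
  unfolding same_cycle_def by (metis funpow.simps(2) o_apply)

text \<open>Some power of a permutation is the identity, so cycles can be run backwards.\<close>

lemma same_cycle_trans_sym:
  assumes "permutation p" "same_cycle p m x" "same_cycle p m y"
  shows "same_cycle p x y"
proof -
  obtain n where n: "p ^^ n = id" "n > 0" using permutation_is_nilpotent[OF assms(1)] by blast
  obtain k j where k: "(p ^^ k) m = x" and j: "(p ^^ j) m = y"
    using assms(2,3) unfolding same_cycle_def by blast
  have "p ^^ ((n - 1) * k + k) = p ^^ (n * k)"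
    using n(2) by (simp add: algebra_simps)
  also have "\<dots> = id" using n(1) by (simp add: funpow_mult[symmetric])
  finally have "(p ^^ ((n - 1) * k)) x = m"
    unfolding k[symmetric] by (metis funpow_add o_apply id_apply)
  then have "(p ^^ (j + (n - 1) * k)) x = y"
    using j by (simp add: funpow_add)
  then show ?thesis unfolding same_cycle_def by blast
qed

text \<open>The step may fail at \<open>c\<close>: by the time the walk from \<open>f c\<close> reaches \<open>c\<close> it has covered \<open>S\<close>.\<close>

lemma same_cycle_induct:
  assumes cycle: "\<And>x y. x \<in> S \<Longrightarrow> y \<in> S \<Longrightarrow> same_cycle f x y"
    and closed: "\<And>x. x \<in> S \<Longrightarrow> f x \<in> S" and "c \<in> S" "P (f c)"
    and step: "\<And>x. x \<in> S \<Longrightarrow> x \<noteq> c \<Longrightarrow> P x \<Longrightarrow> P (f x)"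
    and "x \<in> S"
  shows "P x"
proof -
  have "(f ^^ n) (f c) \<in> S \<and> P ((f ^^ n) (f c))" for n
  proof (induction n)
    case (Suc n)
    then show ?case
      using closed step \<open>P (f c)\<close> by (cases "(f ^^ n) (f c) = c") auto
  qed (use closed \<open>c \<in> S\<close> \<open>P (f c)\<close> in simp)
  moreover obtain k where "(f ^^ k) (f c) = x"
    using cycle[OF closed[OF \<open>c \<in> S\<close>] \<open>x \<in> S\<close>] unfolding same_cycle_def by blast
  ultimately show ?thesis by blast
qed

text \<open>The hypotheses on \<open>p\<close> describe \<open>s \<circ> transpose a b\<close> for an \<open>s\<close> acting as \<open>f\<close> on \<open>X\<close>
  and as \<open>g\<close> on \<open>Y\<close>: the transposition splices the two cycles into one.\<close>

lemma same_cycle_splice: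
  assumes "a \<in> X" "b \<in> Y"
    and f: "\<And>x. x \<in> X \<Longrightarrow> f x \<in> X" "\<And>x y. x \<in> X \<Longrightarrow> y \<in> X \<Longrightarrow> same_cycle f x y"
    and g: "\<And>y. y \<in> Y \<Longrightarrow> g y \<in> Y" "\<And>x y. x \<in> Y \<Longrightarrow> y \<in> Y \<Longrightarrow> same_cycle g x y"
    and p: "p b = f a" "p a = g b" "\<And>x. x \<in> X \<Longrightarrow> x \<noteq> a \<Longrightarrow> p x = f x"
      "\<And>y. y \<in> Y \<Longrightarrow> y \<noteq> b \<Longrightarrow> p y = g y"
    and "x \<in> X \<union> Y"
  shows "same_cycle p b x"
proof -
  have X: "same_cycle p b x" if "x \<in> X" for x
  proof (rule same_cycle_induct[where P = "same_cycle p b", OF f(2,1) \<open>a \<in> X\<close> _ _ that])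
    show "same_cycle p b (f a)" using same_cycle_step[OF same_cycle_refl] p(1) by metis
  next
    fix x assume "x \<in> X" "x \<noteq> a" "same_cycle p b x"
    then show "same_cycle p b (f x)" using same_cycle_step p(3) by metis
  qed
  have Y: "same_cycle p b y" if "y \<in> Y" for y
  proof (rule same_cycle_induct[where P = "same_cycle p b", OF g(2,1) \<open>b \<in> Y\<close> _ _ that])
    show "same_cycle p b (g b)" using same_cycle_step[OF X[OF \<open>a \<in> X\<close>]] p(2) by metis
  next
    fix y assume "y \<in> Y" "y \<noteq> b" "same_cycle p b y"
    then show "same_cycle p b (g y)" using same_cycle_step p(4) by metis
  qed
  show ?thesis using X Y \<open>x \<in> X \<union> Y\<close> by blast
qed

lemma monotone_trees_same_cycle:
  "finite V \<Longrightarrow> ts \<in> monotone_trees V \<Longrightarrow> x \<in> V \<Longrightarrow> y \<in> V \<Longrightarrow> same_cycle (prod_transp ts) x y"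
proof (induction "card V" arbitrary: V ts x y rule: less_induct)
  case less
  note fV = less.prems(1) and tree = less.prems(2)
  show ?case
  proof (cases "card V \<ge> 2")
    case False
    moreover have "card V > 0" using less.prems(1,3) card_gt_0_iff by blast
    ultimately have "card V = 1" by linarith
    then obtain v where "V = {v}" using card_1_singletonE by blast
    then show ?thesis using less.prems(3,4) same_cycle_refl by simp
  next
    case True
    let ?M = "Max V"
    obtain X a s1 s2 where t: "(X, a, s1, s2) \<in> monotone_tree_splittings V"
      "join_monotone_trees V (X, a, s1, s2) = ts"
      using monotone_trees_split[OF fV True tree] by (metis prod_cases4)
    note parts = monotone_tree_splittingsD[OF fV t(1)]
    have XV: "X \<subseteq> V" and aX: "a \<in> X" and MX: "?M \<in> V - X"
      and s1: "s1 \<in> monotone_trees X" and s2: "s2 \<in> monotone_trees (V - X)"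
      using parts by auto
    define u where "u = sort_key snd (s1 @ s2)"
    have ts: "ts = u @ [(a, ?M)]" using t(2) unfolding join_monotone_trees_def u_def by simp
    note u = monotone_tree_splittings_sort_key[OF t(1), folded u_def]
    have on_X: "prod_transp u x = prod_transp s1 x \<and> prod_transp s1 x \<in> X" if "x \<in> X" for x
      using prod_transp_transps_inside[OF u(1) that] u(2) by metis
    have on_Y: "prod_transp u y = prod_transp s2 y \<and> prod_transp s2 y \<in> V - X" if "y \<in> V - X" for y
    proof -
      have "prod_transp u y = prod_transp (transps_inside (- X) u) y"
        using prod_transp_transps_inside[OF transps_closed_Compl[OF u(1)], of y] that by blast
      also have "transps_inside (- X) u = s2" using u(3) by simp
      finally show ?thesis
        using prod_transp_transps_inside[OF transps_closed_if_within[OF transps_within_monotone_trees[OF s2]] that]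
        by blast
    qed
    have "card X < card V" "card (V - X) < card V"
      using psubset_card_mono[OF fV] XV MX aX by auto
    note IH = less.hyps[OF this(1) parts(2) s1] less.hyps[OF this(2) finite_Diff[OF fV] s2]
    have "same_cycle (prod_transp ts) ?M z" if "z \<in> V" for z
    proof (rule same_cycle_splice[where f = "prod_transp s1" and g = "prod_transp s2" and Y = "V - X"])
      have "a \<noteq> ?M" using aX MX by blast
      then show "prod_transp ts ?M = prod_transp s1 a" "prod_transp ts a = prod_transp s2 ?M"
        using on_X[OF aX] on_Y[OF MX] by (simp_all add: ts prod_transp_append)
      show "prod_transp ts x = prod_transp s1 x" if "x \<in> X" "x \<noteq> a" for x
      proof -
        have "x \<noteq> ?M" using that MX by blast
        then show ?thesis using on_X[OF that(1)] that(2) by (simp add: ts prod_transp_append)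
      qed
      show "prod_transp ts y = prod_transp s2 y" if "y \<in> V - X" "y \<noteq> ?M" for y
      proof -
        have "y \<noteq> a" using that aX by blast
        then show ?thesis using on_Y[OF that(1)] that(2) by (simp add: ts prod_transp_append)
      qed
    qed (use on_X on_Y IH aX MX that in auto)
    then show ?thesis
      using same_cycle_trans_sym[OF permutation_prod_transp] less.prems(3,4) by blast
  qed
qed

section \<open>Genus zero, one part\<close>

lemma monotone_hurwitz_data_genus0_single:
  assumes "mu > 0"
  shows "monotone_hurwitz_data 0 [mu] = (\<lambda>ts. (ts, \<lambda>_\<in>{..<mu}. 0)) ` monotone_trees {..<mu}"
proof -
  have labelling: "c \<in> {..<mu} \<rightarrow>\<^sub>E {..<Suc 0} \<longleftrightarrow> c = (\<lambda>_\<in>{..<mu}. 0)" for c :: "nat \<Rightarrow> nat"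
    using PiE_eq_singleton[of "{..<mu}" "\<lambda>_. {..<Suc 0}" "\<lambda>_. 0"] by auto
  have tree: "ts \<in> monotone_trees {..<mu} \<longleftrightarrow> length ts = mu - 1 \<and> (\<forall>(a, b)\<in>set ts. a < b \<and> b < mu)
      \<and> sorted (map snd ts) \<and> transp_connected {..<mu} ts" for ts
    unfolding monotone_trees_def by fastforce
  have "same_cycle (prod_transp ts) x y"
    if "ts \<in> monotone_trees {..<mu}" "x < mu" "y < mu" for ts x y
    using monotone_trees_same_cycle[OF _ that(1)] that(2,3) by simp
  then show ?thesis
    unfolding monotone_hurwitz_data_def Let_def transitive_transp_iff_transp_connected
    using assms by (auto simp: labelling tree image_def)
qed

lemma monotone_hurwitz_genus0_single_catalan:
  assumes "mu > 0"
  shows "monotone_hurwitz 0 [mu] = catalan (mu - 1) / mu"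
proof -
  have "card (monotone_hurwitz_data 0 [mu]) = card (monotone_trees {..<mu})"
    unfolding monotone_hurwitz_data_genus0_single[OF assms]
    by (rule card_image) (auto simp: inj_on_def)
  also have "\<dots> = fact (mu - 1) * catalan (mu - 1)"
    using card_monotone_trees[of "{..<mu}"] assms by auto
  finally show ?thesis
    unfolding monotone_hurwitz_def using assms fact_reduce[of mu, where 'a = real] by (simp add: field_simps)
qed

section \<open>The Catalan generating function\<close>

definition catalan_fps :: "real fps" where
  "catalan_fps = Abs_fps (\<lambda>k. real (catalan k))"

lemma catalan_fps_equation: "fps_X * catalan_fps ^ 2 = catalan_fps - 1"
proof (rule fps_ext)
  fix n
  show "(fps_X * catalan_fps ^ 2) $ n = (catalan_fps - 1) $ n"
  proof (cases n)
    case (Suc m)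
    have "(fps_X * catalan_fps ^ 2) $ n = (catalan_fps * catalan_fps) $ m"
      using Suc by (simp add: power2_eq_square)
    also have "\<dots> = real (catalan (Suc m))"
      by (simp add: fps_mult_nth catalan_fps_def atLeast0AtMost)
    finally show ?thesis using Suc by (simp add: catalan_fps_def)
  qed (simp add: catalan_fps_def)
qed

text \<open>The equation determines all coefficients after the constant one recursively.\<close>

lemma catalan_equation_unique:
  fixes y z :: "'a :: comm_ring_1 fps"
  assumes "y $ 0 = 1" "fps_X * y ^ 2 = y - 1" "z $ 0 = 1" "fps_X * z ^ 2 = z - 1"
  shows "y = z"
proof -
  have coeff: "f $ Suc n = (\<Sum>i=0..n. f $ i * f $ (n - i))" if "fps_X * f ^ 2 = f - 1" for f :: "'a fps" and n
  proof -
    have "f $ Suc n = (fps_X * f ^ 2) $ Suc n" using that by simp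
    also have "\<dots> = (f * f) $ n" by (simp add: power2_eq_square)
    finally show ?thesis by (simp add: fps_mult_nth)
  qed
  have "\<forall>i\<le>n. y $ i = z $ i" for n
  proof (induction n)
    case (Suc n)
    have "y $ Suc n = z $ Suc n"
      unfolding coeff[OF assms(2)] coeff[OF assms(4)] using Suc.IH by (intro sum.cong) auto
    then show ?case using Suc.IH le_Suc_eq by auto
  qed (use assms in simp)
  then show ?thesis by (intro fps_ext) blast
qed

lemma sqrt_one_minus_four_X_fps:
  "Abs_fps (\<lambda>n. ((1/2::real) gchoose n) * (-4) ^ n) ^ 2 = 1 - fps_const 4 * fps_X"
proof (rule fps_ext)
  fix n
  let ?B = "fps_binomial (1/2 :: real)"
  have BB: "?B * ?B = 1 + fps_X"
    using fps_binomial_add_mult[of "1/2" "1/2 :: real", symmetric] fps_binomial_of_nat[of 1] by simp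
  have "(Abs_fps (\<lambda>n. ((1/2::real) gchoose n) * (-4) ^ n) ^ 2) $ n
      = (\<Sum>i=0..n. (-4) ^ n * (((1/2) gchoose i) * ((1/2) gchoose (n - i))))"
    unfolding power2_eq_square fps_mult_nth
    by (intro sum.cong refl) (auto simp: power_add[symmetric])
  also have "\<dots> = (-4) ^ n * (?B * ?B) $ n" by (simp add: fps_mult_nth sum_distrib_left)
  also have "\<dots> = (1 - fps_const 4 * fps_X) $ n"
    unfolding BB by (cases "n = 1") auto
  finally show "(Abs_fps (\<lambda>n. ((1/2::real) gchoose n) * (-4) ^ n) ^ 2) $ n = (1 - fps_const 4 * fps_X) $ n" .
qed

text \<open>Solving the quadratic equation: \<open>2 x z = 1 - \<surd>(1 - 4x)\<close>.\<close>

lemma catalan_gchoose: "real (catalan k) = - (1/2) * (((1/2) gchoose Suc k) * (-4) ^ Suc k)"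
proof -
  define B :: "real fps" where "B = Abs_fps (\<lambda>n. ((1/2) gchoose n) * (-4) ^ n)"
  define w where "w = Abs_fps (\<lambda>k. - (1/2) * B $ Suc k)"
  have w_X: "fps_const 2 * (fps_X * w) = 1 - B"
  proof (rule fps_ext)
    fix n show "(fps_const 2 * (fps_X * w)) $ n = (1 - B) $ n"
      by (cases n) (simp_all add: w_def B_def)
  qed
  have "fps_const 4 * fps_X * (fps_X * w ^ 2) = fps_const 4 * fps_X * (w - 1)"
  proof -
    have "fps_const (4::real) = fps_const 2 * fps_const 2" "fps_const (2::real) = 2"
      by (simp_all add: fps_const_mult numeral_fps_const)
    then show ?thesis
      using w_X sqrt_one_minus_four_X_fps[folded B_def] by algebra
  qed
  moreover have "fps_const 4 * fps_X \<noteq> (0 :: real fps)" by simp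
  ultimately have w_equation: "fps_X * w ^ 2 = w - 1" by simp
  have "catalan_fps = w"
    by (rule catalan_equation_unique[OF _ catalan_fps_equation _ w_equation])
      (simp_all add: catalan_fps_def w_def B_def)
  then have "catalan_fps $ k = w $ k" by simp
  then show ?thesis by (simp add: catalan_fps_def w_def B_def)
qed

lemma catalan_Suc_rec: "real (catalan (Suc k)) * (real k + 2) = (4 * real k + 2) * real (catalan k)"
proof -
  let ?G1 = "(1/2::real) gchoose Suc k" and ?G2 = "(1/2::real) gchoose Suc (Suc k)"
    and ?P = "(-4::real) ^ Suc k"
  have Suc: "real (catalan (Suc k)) = 2 * (?G2 * ?P)"
    using catalan_gchoose[of "Suc k"] by simp
  have "(1/2) * ?G1 = (real k + 1) * ?G1 + (real k + 2) * ?G2"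
    using gbinomial_mult_1[of "1/2::real" "Suc k"] by (simp add: add.commute)
  then have G2: "(real k + 2) * ?G2 = (- real k - 1/2) * ?G1" by (simp add: algebra_simps)
  have "real (catalan (Suc k)) * (real k + 2) = 2 * ?P * ((real k + 2) * ?G2)"
    unfolding Suc by (simp only: mult_ac)
  also have "\<dots> = (4 * real k + 2) * (- (1/2) * (?G1 * ?P))"
    unfolding G2 by (simp add: algebra_simps)
  also have "\<dots> = (4 * real k + 2) * real (catalan k)"
    unfolding catalan_gchoose[of k] ..
  finally show ?thesis .
qed

lemma catalan_fact: "real (catalan k) * (fact k * fact (Suc k)) = fact (2 * k)"
proof (induction k)
  case (Suc k)
  have "fact (2 * Suc k) = (real (2 * k) + 2) * (real (2 * k) + 1) * (fact (2 * k) :: real)"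
    by (simp add: algebra_simps)
  moreover have "fact (Suc k) = (real k + 1) * (fact k :: real)"
    "fact (Suc (Suc k)) = (real k + 2) * (fact (Suc k) :: real)" "real (2 * k) = 2 * real k"
    by simp_all
  ultimately show ?case using catalan_Suc_rec[of k] Suc.IH by algebra
qed simp

lemma central_binomial_catalan:
  "real ((2 * Suc k) choose Suc k) = 2 * (2 * real k + 1) * real (catalan k)"
proof -
  have "fact (Suc k) * fact (2 * Suc k - Suc k) * ((2 * Suc k) choose Suc k) = (fact (2 * Suc k) :: nat)"
    by (rule binomial_fact_lemma) simp
  then have "real (fact (Suc k) * fact (Suc k) * ((2 * Suc k) choose Suc k)) = real (fact (2 * Suc k))"
    by simp
  then have "real ((2 * Suc k) choose Suc k) * (fact (Suc k) * fact (Suc k)) = fact (2 * Suc k)"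
    by (simp add: algebra_simps)
  also have "\<dots> = (2 * real k + 2) * (2 * real k + 1) * fact (2 * k)"
    by (simp add: algebra_simps)
  also have "\<dots> = 2 * (2 * real k + 1) * real (catalan k) * (fact (Suc k) * fact (Suc k))"
    unfolding catalan_fact[of k, symmetric] by (simp add: algebra_simps)
  finally show ?thesis by simp
qed

lemma monotone_hurwitz_genus0_single_binomial:
  assumes "mu > 0"
  shows "monotone_hurwitz 0 [mu] = real ((2 * mu) choose mu) / (2 * real mu * (2 * real mu - 1))"
proof -
  obtain k where k: "mu = Suc k" using assms gr0_implies_Suc by blast
  have "2 * real mu * (2 * real mu - 1) = 2 * (2 * real k + 1) * real mu"
    unfolding k by (simp add: algebra_simps)
  then show ?thesis
    using monotone_hurwitz_genus0_single_catalan[OF assms]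
    unfolding k central_binomial_catalan by simp
qed

lemma fps_deriv_F01: "fps_deriv F01 = catalan_fps"
proof (rule fps_ext)
  fix n
  show "fps_deriv F01 $ n = catalan_fps $ n"
    using monotone_hurwitz_genus0_single_catalan[of "n + 1"]
    by (simp add: F01_def catalan_fps_def)
qed

lemma catalan_fps_sums:
  fixes x :: real
  assumes "x \<noteq> 0" "\<bar>x\<bar> < 1/4"
  shows "(\<lambda>k. catalan_fps $ k * x ^ k) sums ((1 - sqrt (1 - 4 * x)) / (2 * x))"
proof -
  let ?f = "\<lambda>n. ((1/2::real) gchoose n) * (-4 * x) ^ n"
  have "?f sums sqrt (1 + -4 * x)" using assms(2) by (intro sqrt_series) simp
  then have "(\<lambda>n. ?f (Suc n)) sums (sqrt (1 - 4 * x) - 1)"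
    by (subst sums_Suc_iff) simp
  then have "(\<lambda>n. - 1 / (2 * x) * ?f (Suc n)) sums (- 1 / (2 * x) * (sqrt (1 - 4 * x) - 1))"
    by (rule sums_mult)
  moreover have "- 1 / (2 * x) * ?f (Suc k) = catalan_fps $ k * x ^ k" for k
  proof -
    have "(-4 * x) ^ Suc k = (-4) ^ Suc k * (x * x ^ k)"
      by (simp only: power_mult_distrib power_Suc[of x])
    then show ?thesis
      using assms(1) unfolding catalan_fps_def fps_nth_Abs_fps catalan_gchoose
      by (simp add: field_simps)
  qed
  moreover have "- 1 / (2 * x) * (sqrt (1 - 4 * x) - 1) = (1 - sqrt (1 - 4 * x)) / (2 * x)"
    using assms(1) by (simp add: field_simps)
  ultimately show ?thesis by simp
qed

theorem lemma2p5:
  shows "(\<forall>mu::nat. mu > 0 \<longrightarrow>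
            monotone_hurwitz 0 [mu]
              = real ((2 * mu) choose mu) / (2 * real mu * (2 * real mu - 1)))
       \<and> (\<exists>!z :: real fps. fps_nth z 0 = 1 \<and> fps_X * z ^ 2 = z - 1)
       \<and> (\<forall>z :: real fps. fps_nth z 0 = 1 \<and> fps_X * z ^ 2 = z - 1 \<longrightarrow> fps_deriv F01 = z)
       \<and> (\<forall>x::real. x \<noteq> 0 \<and> \<bar>x\<bar> < 1/4 \<longrightarrow>
            (\<lambda>k. fps_nth (fps_deriv F01) k * x ^ k) sums ((1 - sqrt (1 - 4 * x)) / (2 * x)))"
proof -
  have catalan_0: "catalan_fps $ 0 = 1" by (simp add: catalan_fps_def)
  have unique: "z = catalan_fps" if "z $ 0 = 1" "fps_X * z ^ 2 = z - 1" for z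
    using catalan_equation_unique[OF that catalan_0 catalan_fps_equation] .
  have "\<exists>!z :: real fps. z $ 0 = 1 \<and> fps_X * z ^ 2 = z - 1"
    using catalan_0 catalan_fps_equation unique by blast
  then show ?thesis
    unfolding fps_deriv_F01
    using monotone_hurwitz_genus0_single_binomial unique catalan_fps_sums by auto
qed

end
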